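(* Let $K, L, M, N$ be positive integers with $M\le N$. Consider the $K$-user MIMO broadcast channel with $M$ transmit antennas, $N$ antennas at each receiver, symbol extension factor $L$, and no CSIT, as described in the context. Then the maximum achievable SpAC is $\frac{ML-K+1}{ML}$.
   Context: Model: one transmitter with $M$ antennas and $K$ receivers with $N$ antennas each. Over $L$ channel uses, receiver $i\in\{1,\dots,K\}$ observes $\mathbf{y}_i=\mathbf{H}_{i,i}\sum_{j=1}^K\mathbf{Q}_j\mathbf{x}_j+\mathbf{n}_i\in\mathbb{C}^{NL}$, where $\mathbf{H}_{i,i}\in\mathbb{C}^{NL\times ML}$ is block diagonal with $L$ diagonal blocks $\mathbf{H}_{i,i}(t)\in\mathbb{C}^{N\times M}$ (the channel at use $t$), $\mathbf{x}_j\in\mathbb{C}^d$ is the finite-alphabet symbol vector for receiver $j$, $\mathbf{Q}_j\in\mathbb{C}^{ML\times d}$ is its precoder (rank $d$), and $\mathbf{n}_i$ is Gaussian noise. No CSIT: the precoders are fixed and independent of the channel coefficients. At receiver $i$, the desired subspace is $\mathcal{S}_i=\mathrm{span}(\mathbf{H}_{i,i}\mathbf{Q}_i)$ and the interference subspace is $\mathcal{I}_i=\sum_{j\ne i}\mathrm{span}(\mathbf{H}_{i,i}\mathbf{Q}_j)$. A value $d$ is achievable if there exist channel-independent precoders such that, for almost every realization of the channel coefficients, $\mathcal{S}_i\not\subseteq\mathcal{I}_i$ for every receiver $i$. The SpAC of such a scheme is $d/(ML)$ (symbols per transmit antenna per channel use), and the maximum achievable SpAC is the maximum of $d/(ML)$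 over achievable $d$. *)

theory Defs
  imports "HOL-Analysis.Analysis" "Jordan_Normal_Form.DL_Rank"
begin

text \<open>Receivers are indexed by 0..K-1, channel uses by 0..L-1.
  A channel realization is the finite family of complex coefficients
  h (i, t, r, c) = entry (r, c) of the N x M channel matrix of receiver i at channel use t.\<close>

definition chan_idx :: "nat \<Rightarrow> nat \<Rightarrow> nat \<Rightarrow> nat \<Rightarrow> (nat \<times> nat \<times> nat \<times> nat) set" where
  "chan_idx K L N M = {(i, t, r, c). i < K \<and> t < L \<and> r < N \<and> c < M}"

definition channel_measure :: "nat \<Rightarrow> nat \<Rightarrow> nat \<Rightarrow> nat \<Rightarrow> (nat \<times> nat \<times> nat \<times> nat \<Rightarrow> complex) measure" where
  "channel_measure K L N M = PiM (chan_idx K L N M) (\<lambda>_. (lborel :: complex measure))"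

text \<open>The NL x ML block-diagonal matrix H_{i,i}, whose t-th diagonal block is H_{i,i}(t).\<close>
definition chan_mat :: "nat \<Rightarrow> nat \<Rightarrow> nat \<Rightarrow> (nat \<times> nat \<times> nat \<times> nat \<Rightarrow> complex) \<Rightarrow> nat \<Rightarrow> complex mat" where
  "chan_mat L N M h i = mat (N * L) (M * L)
     (\<lambda>(p, q). if p div N = q div M then h (i, p div N, p mod N, q mod M) else 0)"

definition desired_space :: "nat \<Rightarrow> nat \<Rightarrow> nat \<Rightarrow> (nat \<times> nat \<times> nat \<times> nat \<Rightarrow> complex)
    \<Rightarrow> (nat \<Rightarrow> complex mat) \<Rightarrow> nat \<Rightarrow> complex vec set" where
  "desired_space L N M h Q i = vec_space.col_space (N * L) (chan_mat L N M h i * Q i)"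

definition interference_space :: "nat \<Rightarrow> nat \<Rightarrow> nat \<Rightarrow> nat \<Rightarrow> (nat \<times> nat \<times> nat \<times> nat \<Rightarrow> complex)
    \<Rightarrow> (nat \<Rightarrow> complex mat) \<Rightarrow> nat \<Rightarrow> complex vec set" where
  "interference_space K L N M h Q i =
     module.span class_ring (module_vec TYPE(complex) (N * L))
       (\<Union>j \<in> {j. j < K \<and> j \<noteq> i}. set (cols (chan_mat L N M h i * Q j)))"

definition achievable :: "nat \<Rightarrow> nat \<Rightarrow> nat \<Rightarrow> nat \<Rightarrow> nat \<Rightarrow> bool" where
  "achievable K L M N d \<longleftrightarrow>
     (\<exists>Q :: nat \<Rightarrow> complex mat.
        (\<forall>j < K. Q j \<in> carrier_mat (M * L) d \<and> vec_space.rank (M * L) (Q j) = d) \<and>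
        (AE h in channel_measure K L N M.
           \<forall>i < K. \<not> desired_space L N M h Q i \<subseteq> interference_space K L N M h Q i))"

definition SpAC_set :: "nat \<Rightarrow> nat \<Rightarrow> nat \<Rightarrow> nat \<Rightarrow> real set" where
  "SpAC_set K L M N = {real d / real (M * L) | d. achievable K L M N d}"

end

theory Submission
  imports Defs
begin

(* Converse: fix any channel realization on which every receiver separates its signal. Then each
   precoder Q_i has a column outside the span of the other users' columns, for otherwise H Q_i would
   lie in the interference space. Adjoining such columns of Q_1, ..., Q_{K-1} to a basis of the
   column space of Q_0 yields d + K - 1 independent vectors in C^(ML), so d <= ML - K + 1. Since the
   channel measure is not the zero measure, the almost-sure condition has such a witness.

   Achievability: all users share the unit vectors e_0, ..., e_{ML-K-1} and user i additionally
   uses e_{ML-K+i}. The desired space of receiver i then contains column ML-K+i of H_{i,i}, whereas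
   its interference space is spanned by other columns of H_{i,i}. If the top M x M block of every
   H_{i,i}(t) is invertible, a row of its adjugate separates that column from all the others; and
   a determinant in independent Lebesgue-distributed entries vanishes only on a null set, by
   Laplace expansion along the first row and Fubini. *)

section \<open>Linear algebra\<close>

lemma submodule_vimage_mult_mat_vec:
  fixes H :: "'a :: field mat"
  assumes H: "H \<in> carrier_mat m n"
    and W: "submodule class_ring W (module_vec TYPE('a) m)"
  shows "submodule class_ring {x \<in> carrier_vec n. H *\<^sub>v x \<in> W} (module_vec TYPE('a) n)"
proof -
  interpret Vn: vec_space "TYPE('a)" n .
  interpret W: submodule class_ring W "module_vec TYPE('a) m" by (rule W)
  have "H *\<^sub>v 0\<^sub>v n = 0\<^sub>v m"
    using H by (intro eq_vecI) auto
  then show ?thesis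
    using H W.m_closed W.zero_closed W.smult_closed
    by (unfold_locales) (auto simp: module_vec_simps mult_add_distrib_mat_vec mult_mat_vec)
qed

lemma span_mult_mat_vec_subset:
  fixes H :: "'a :: field mat"
  assumes H: "H \<in> carrier_mat m n" and S: "S \<subseteq> carrier_vec n"
  shows "(\<lambda>v. H *\<^sub>v v) ` module.span class_ring (module_vec TYPE('a) n) S
    \<subseteq> module.span class_ring (module_vec TYPE('a) m) ((\<lambda>v. H *\<^sub>v v) ` S)"
proof -
  interpret Vn: vec_space "TYPE('a)" n .
  interpret Vm: vec_space "TYPE('a)" m .
  have HS: "(\<lambda>v. H *\<^sub>v v) ` S \<subseteq> carrier_vec m"
    using H S by auto
  have "Vn.span S \<subseteq> {x \<in> carrier_vec n. H *\<^sub>v x \<in> Vm.span ((\<lambda>v. H *\<^sub>v v) ` S)}"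
  proof (rule Vn.span_is_subset)
    show "S \<subseteq> {x \<in> carrier_vec n. H *\<^sub>v x \<in> Vm.span ((\<lambda>v. H *\<^sub>v v) ` S)}"
      using S Vm.in_own_span[OF HS] by auto
  qed (rule submodule_vimage_mult_mat_vec[OF H Vm.span_is_submodule[OF HS]])
  then show ?thesis
    by blast
qed

lemma set_cols_mult_mat:
  assumes "A \<in> carrier_mat m n" and "B \<in> carrier_mat n d"
  shows "set (cols (A * B)) = (\<lambda>v. A *\<^sub>v v) ` set (cols B)"
  using assms by (force simp: cols_def)

lemma mult_mat_vec_unit_vec:
  fixes H :: "'a :: semiring_1 mat"
  assumes H: "H \<in> carrier_mat m n" and k: "k < n"
  shows "H *\<^sub>v unit_vec n k = col H k"
  using H k by (intro eq_vecI) auto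

lemma notin_span_if_scalar_prod_separates:
  fixes phi :: "'a :: field vec"
  assumes phi: "phi \<in> carrier_vec m" and A: "A \<subseteq> carrier_vec m"
    and A0: "\<And>x. x \<in> A \<Longrightarrow> scalar_prod phi x = 0" and v: "scalar_prod phi v \<noteq> 0"
  shows "v \<notin> module.span class_ring (module_vec TYPE('a) m) A"
proof -
  interpret Vm: vec_space "TYPE('a)" m .
  have "submodule class_ring {x \<in> carrier_vec m. scalar_prod phi x = 0} (module_vec TYPE('a) m)"
    using phi by unfold_locales (auto simp: scalar_prod_add_distrib[of _ m] scalar_prod_smult_distrib[of _ m])
  then have "Vm.span A \<subseteq> {x \<in> carrier_vec m. scalar_prod phi x = 0}"
    using A A0 by (intro Vm.span_is_subset) auto
  with v show ?thesis
    by blast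
qed

lemma col_space_mult_subset_span:
  fixes H A :: "'a :: field mat"
  assumes H: "H \<in> carrier_mat m n" and A: "A \<in> carrier_mat n d"
    and T: "T \<subseteq> carrier_vec n"
    and cols_A: "set (cols A) \<subseteq> module.span class_ring (module_vec TYPE('a) n) T"
  shows "vec_space.col_space m (H * A) \<subseteq> module.span class_ring (module_vec TYPE('a) m) ((\<lambda>v. H *\<^sub>v v) ` T)"
proof -
  interpret Vm: vec_space "TYPE('a)" m .
  have HT: "(\<lambda>v. H *\<^sub>v v) ` T \<subseteq> carrier_vec m"
    using H T by auto
  have "set (cols (H * A)) \<subseteq> Vm.span ((\<lambda>v. H *\<^sub>v v) ` T)"
    using set_cols_mult_mat[OF H A] cols_A span_mult_mat_vec_subset[OF H T] by blast
  then show ?thesis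
    unfolding Vm.col_space_def by (rule Vm.span_is_subset[OF _ Vm.span_is_submodule[OF HT]])
qed

lemma (in vec_space) lin_indpt_extend_seq:
  assumes S: "lin_indpt S" "finite S" "S \<subseteq> carrier_vec n"
    and v: "\<And>k. k < l \<Longrightarrow> v k \<in> carrier_vec n" "\<And>k. k < l \<Longrightarrow> v k \<notin> span (S \<union> v ` {..<k})"
  shows "lin_indpt (S \<union> v ` {..<l}) \<and> card (S \<union> v ` {..<l}) = card S + l"
  using v
proof (induction l)
  case 0
  then show ?case using S by simp
next
  case (Suc l)
  define B where "B = S \<union> v ` {..<l}"
  have IH: "lin_indpt B" "card B = card S + l" and B: "B \<subseteq> carrier_vec n" "finite B"
    using Suc S unfolding B_def by auto
  have vl: "v l \<in> carrier_vec n" "v l \<notin> span B"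
    using Suc.prems unfolding B_def by auto
  then have "v l \<notin> B"
    using in_own_span[OF B(1)] by blast
  moreover have "lin_indpt (B \<union> {v l})"
    using lin_dep_iff_in_span[OF B(1) IH(1) vl(1) \<open>v l \<notin> B\<close>] vl(2) by blast
  moreover have "S \<union> v ` {..<Suc l} = B \<union> {v l}"
    unfolding B_def by (auto simp: lessThan_Suc)
  ultimately show ?case
    using IH(2) B(2) by simp
qed

lemma precoder_rank_bound:
  fixes Q H :: "nat \<Rightarrow> 'a :: field mat"
  assumes K: "0 < K"
    and Q: "\<forall>j<K. Q j \<in> carrier_mat n d \<and> vec_space.rank n (Q j) = d"
    and H: "\<forall>i<K. H i \<in> carrier_mat m n"
    and separated: "\<forall>i<K. \<not> vec_space.col_space m (H i * Q i) \<subseteq>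
       module.span class_ring (module_vec TYPE('a) m) (\<Union>j\<in>{j. j<K \<and> j\<noteq>i}. set (cols (H i * Q j)))"
  shows "d + K - 1 \<le> n"
proof -
  interpret Vn: vec_space "TYPE('a)" n .
  define others where "others i = (\<Union>j\<in>{j. j<K \<and> j\<noteq>i}. set (cols (Q j)))" for i
  have others_carrier: "others i \<subseteq> carrier_vec n" for i
    using Q cols_dim unfolding others_def by fastforce
  have "\<exists>v \<in> set (cols (Q i)). v \<notin> Vn.span (others i)" if i: "i < K" for i
  proof (rule ccontr)
    assume "\<not> ?thesis"
    then have "vec_space.col_space m (H i * Q i) \<subseteq>
        module.span class_ring (module_vec TYPE('a) m) ((\<lambda>v. H i *\<^sub>v v) ` others i)"
      using Q H i by (intro col_space_mult_subset_span[OF _ _ others_carrier]) auto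
    moreover have "(\<lambda>v. H i *\<^sub>v v) ` others i = (\<Union>j\<in>{j. j<K \<and> j\<noteq>i}. set (cols (H i * Q j)))"
      unfolding others_def image_UN
    proof (intro SUP_cong refl)
      fix j assume "j \<in> {j. j < K \<and> j \<noteq> i}"
      then show "(\<lambda>v. H i *\<^sub>v v) ` set (cols (Q j)) = set (cols (H i * Q j))"
        using Q H i set_cols_mult_mat[of "H i" m n "Q j" d] by simp
    qed
    ultimately show False
      using separated i by simp
  qed
  then obtain v where v: "\<And>i. i < K \<Longrightarrow> v i \<in> set (cols (Q i)) \<and> v i \<notin> Vn.span (others i)"
    by metis
  have Q0: "Q 0 \<in> carrier_mat n d" "Vn.rank (Q 0) = d"
    using Q K by auto
  obtain S where S: "maximal S (\<lambda>T. T \<subseteq> set (cols (Q 0)) \<and> Vn.lin_indpt T)"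
    using maximal_exists_superset[of "set (cols (Q 0))" "\<lambda>T. T \<subseteq> set (cols (Q 0)) \<and> Vn.lin_indpt T" "{}"]
    by (auto simp: Vn.lin_dep_def)
  then have S_cols: "S \<subseteq> set (cols (Q 0))" and S_li: "Vn.lin_indpt S"
    unfolding maximal_def by blast+
  have "card S = d"
    using Vn.rank_card_indpt[OF Q0(1) S] Q0(2) by simp
  have S_fin: "finite S"
    by (rule finite_subset[OF S_cols List.finite_set])
  have "set (cols (Q 0)) \<subseteq> carrier_vec n"
    using cols_dim[of "Q 0"] Q0(1) by (metis carrier_matD(1))
  with S_cols have S_carrier: "S \<subseteq> carrier_vec n"
    by (rule order_trans)
  define w where "w k = v (Suc k)" for k
  have w: "w k \<in> carrier_vec n" "w k \<notin> Vn.span (S \<union> w ` {..<k})" if k: "k < K - 1" for k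
  proof -
    have "set (cols (Q 0)) \<subseteq> others (Suc k)"
      using K unfolding others_def by blast
    moreover have "w k' \<in> others (Suc k)" if "k' < k" for k'
      using v[of "Suc k'"] that k unfolding others_def w_def by (intro UN_I[of "Suc k'"]) auto
    ultimately have "S \<union> w ` {..<k} \<subseteq> others (Suc k)"
      using S_cols by blast
    then have "Vn.span (S \<union> w ` {..<k}) \<subseteq> Vn.span (others (Suc k))"
      by (rule Vn.span_is_monotone)
    moreover have w_col: "w k \<in> set (cols (Q (Suc k)))" and "w k \<notin> Vn.span (others (Suc k))"
      using v[of "Suc k"] k unfolding w_def by auto
    ultimately show "w k \<notin> Vn.span (S \<union> w ` {..<k})"
      by blast
    have "Q (Suc k) \<in> carrier_mat n d"
      using Q k by simp
    then show "w k \<in> carrier_vec n"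
      using w_col cols_dim[of "Q (Suc k)"] by (metis carrier_matD(1) subsetD)
  qed
  have "Vn.lin_indpt (S \<union> w ` {..<K - 1})" "card (S \<union> w ` {..<K - 1}) = d + (K - 1)"
    using Vn.lin_indpt_extend_seq[OF S_li S_fin S_carrier w] \<open>card S = d\<close> by auto
  moreover have "S \<union> w ` {..<K - 1} \<subseteq> carrier_vec n"
    using S_carrier w by auto
  ultimately have "d + (K - 1) \<le> n"
    using Vn.li_le_dim(2)[OF Vn.fin_dim] Vn.dim_is_n by metis
  then show ?thesis
    using K by simp
qed

section \<open>Null sets of the product Lebesgue measure\<close>

lemma AE_imp_ex_in_space:
  assumes "emeasure M (space M) \<noteq> 0" and "AE x in M. P x"
  shows "\<exists>x \<in> space M. P x"
proof (rule ccontr)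
  assume "\<not> ?thesis"
  with assms(2) have "AE x in M. \<not> True"
    by auto
  then have "emeasure M {x \<in> space M. True} = 0"
    by (rule emeasure_eq_0_AE)
  with assms(1) show False
    by simp
qed

lemma emeasure_space_PiM_lborel_ne_0:
  assumes "finite I"
  shows "emeasure (PiM I (\<lambda>_. lborel :: 'a :: euclidean_space measure)) (space (PiM I (\<lambda>_. lborel))) \<noteq> 0"
proof -
  interpret product_sigma_finite "\<lambda>_. lborel :: 'a measure" ..
  have "space (PiM I (\<lambda>_. lborel :: 'a measure)) = (\<Pi>\<^sub>E i\<in>I. UNIV)"
    by (simp add: space_PiM)
  then show ?thesis
    using emeasure_PiM[OF assms, of "\<lambda>_. UNIV"] by simp
qed

lemma AE_PiM_lborel_coordinate_neq:
  fixes g :: "('i \<Rightarrow> 'a :: euclidean_space) \<Rightarrow> 'a"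
  assumes I: "finite I" and k: "k \<in> I"
    and g: "g \<in> borel_measurable (PiM I (\<lambda>_. lborel))"
    and g_indep: "\<And>x y. g (x(k := y)) = g x"
  shows "AE h in PiM I (\<lambda>_. lborel). h k \<noteq> g h"
proof -
  interpret product_sigma_finite "\<lambda>_. lborel :: 'a measure" ..
  define J where "J = I - {k}"
  have IJ: "I = insert k J" and "k \<notin> J" "finite J"
    using k I unfolding J_def by auto
  define Z where "Z = {h \<in> space (PiM I (\<lambda>_. lborel)). h k = g h}"
  have "(\<lambda>h. h k - g h) \<in> borel_measurable (PiM I (\<lambda>_. lborel))"
    using g measurable_component_singleton[OF k, of "\<lambda>_. lborel"]
    by (intro borel_measurable_diff) simp_all
  then have "(\<lambda>h. h k - g h) -` {0} \<inter> space (PiM I (\<lambda>_. lborel)) \<in> sets (PiM I (\<lambda>_. lborel))"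
    by (rule borel_measurable_vimage)
  also have "(\<lambda>h. h k - g h) -` {0} \<inter> space (PiM I (\<lambda>_. lborel)) = Z"
    unfolding Z_def by auto
  finally have Z: "Z \<in> sets (PiM I (\<lambda>_. lborel))" .
  \<comment> \<open>Fubini: for fixed other coordinates, the slice of Z is the single point g x.\<close>
  have "emeasure (PiM I (\<lambda>_. lborel)) Z = (\<integral>\<^sup>+ h. indicator Z h \<partial>PiM I (\<lambda>_. lborel))"
    using Z by simp
  also have "\<dots> = (\<integral>\<^sup>+ x. (\<integral>\<^sup>+ y. indicator Z (x(k := y)) \<partial>lborel) \<partial>PiM J (\<lambda>_. lborel))"
    unfolding IJ by (rule product_nn_integral_insert[OF \<open>finite J\<close> \<open>k \<notin> J\<close>]) (use Z IJ in auto)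
  also have "\<dots> = (\<integral>\<^sup>+ x. emeasure lborel {g x} \<partial>PiM J (\<lambda>_. lborel))"
  proof (intro nn_integral_cong)
    fix x assume x: "x \<in> space (PiM J (\<lambda>_. lborel :: 'a measure))"
    have "indicator Z (x(k := y)) = (indicator {g x} y :: ennreal)" for y
    proof -
      have "x(k := y) \<in> space (PiM I (\<lambda>_. lborel :: 'a measure))"
        using x unfolding IJ by (auto simp: space_PiM PiE_def extensional_def)
      then show ?thesis
        unfolding Z_def by (auto simp: indicator_def g_indep)
    qed
    then show "(\<integral>\<^sup>+ y. indicator Z (x(k := y)) \<partial>lborel) = emeasure lborel {g x}"
      by simp
  qed
  also have "\<dots> = 0"
    by (simp add: emeasure_lborel_countable)
  finally have "Z \<in> null_sets (PiM I (\<lambda>_. lborel))"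
    using Z by auto
  then show ?thesis
    by (rule AE_I') (auto simp: Z_def)
qed

lemma det_mat_laplace_row0:
  fixes f :: "nat \<times> nat \<Rightarrow> 'a :: comm_ring_1"
  shows "det (mat (Suc m) (Suc m) f) =
    (\<Sum>j<Suc m. f (0, j) * ((-1) ^ j * det (mat m m (\<lambda>(r, c). f (Suc r, if c < j then c else Suc c)))))"
proof -
  let ?A = "mat (Suc m) (Suc m) f"
  have "mat_delete ?A 0 j = mat m m (\<lambda>(r, c). f (Suc r, if c < j then c else Suc c))" if "j < Suc m" for j
    using that unfolding mat_delete_def by (intro eq_matI) auto
  moreover have "det ?A = (\<Sum>j<Suc m. ?A $$ (0, j) * cofactor ?A 0 j)"
    by (rule laplace_expansion_row) auto
  ultimately show ?thesis
    unfolding cofactor_def by (auto intro!: sum.cong)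
qed

lemma borel_measurable_det_mat_coordinates:
  assumes "\<sigma> ` ({..<m} \<times> {..<m}) \<subseteq> I"
  shows "(\<lambda>h. det (mat m m (\<lambda>rc. h (\<sigma> rc))))
    \<in> borel_measurable (PiM I (\<lambda>_. lborel :: 'a :: {euclidean_space, real_normed_field} measure))"
proof -
  have "det (mat m m f) = (\<Sum>p | p permutes {0..<m}. of_int (sign p) * (\<Prod>i = 0..<m. f (i, p i)))"
    for f :: "nat \<times> nat \<Rightarrow> 'a"
    unfolding det_def by (auto intro!: sum.cong prod.cong simp: permutes_in_image)
  moreover have "(\<lambda>h. h (\<sigma> (i, p i))) \<in> borel_measurable (PiM I (\<lambda>_. lborel :: 'a measure))"
    if "p permutes {0..<m}" "i \<in> {0..<m}" for p i
  proof -
    have "\<sigma> (i, p i) \<in> I"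
      using that assms by (auto simp: permutes_in_image)
    from measurable_component_singleton[OF this, of "\<lambda>_. lborel"] show ?thesis
      by simp
  qed
  ultimately show ?thesis
    by simp
qed

lemma AE_det_mat_ne_0:
  fixes \<sigma> :: "nat \<times> nat \<Rightarrow> 'i"
  assumes I: "finite I"
  shows "\<sigma> ` ({..<m} \<times> {..<m}) \<subseteq> I \<Longrightarrow> inj_on \<sigma> ({..<m} \<times> {..<m}) \<Longrightarrow>
    AE h in PiM I (\<lambda>_. lborel :: 'a :: {euclidean_space, real_normed_field} measure).
      det (mat m m (\<lambda>rc. h (\<sigma> rc))) \<noteq> 0"
proof (induction m arbitrary: \<sigma>)
  case 0
  have "mat 0 0 f = 1\<^sub>m 0" for f :: "nat \<times> nat \<Rightarrow> 'a"
    by (rule eq_matI) auto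
  then show ?case
    by simp
next
  case (Suc m)
  define k where "k = \<sigma> (0, 0)"
  define \<tau> where "\<tau> j = (\<lambda>(r, c). \<sigma> (Suc r, if c < j then c else Suc c))" for j
  define D where "D j h = det (mat m m (\<lambda>rc. h (\<tau> j rc)))" for j and h :: "'i \<Rightarrow> 'a"
  define R where "R h = (\<Sum>j<m. h (\<sigma> (0, Suc j)) * ((-1) ^ Suc j * D (Suc j) h))" for h :: "'i \<Rightarrow> 'a"
  have inj: "x = y" if "\<sigma> x = \<sigma> y" "x \<in> {..<Suc m} \<times> {..<Suc m}" "y \<in> {..<Suc m} \<times> {..<Suc m}" for x y
    using that Suc.prems(2) by (auto dest: inj_onD)
  have \<tau>: "\<tau> j ` ({..<m} \<times> {..<m}) \<subseteq> I" "inj_on (\<tau> j) ({..<m} \<times> {..<m})"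
    "\<And>rc. rc \<in> {..<m} \<times> {..<m} \<Longrightarrow> \<tau> j rc \<noteq> k" for j
    using Suc.prems(1) inj unfolding \<tau>_def k_def inj_on_def by (fastforce split: if_splits)+
  have row0: "\<sigma> (0, Suc j) \<in> I" "\<sigma> (0, Suc j) \<noteq> k" if "j < m" for j
    using that Suc.prems(1) inj[of "(0, Suc j)" "(0, 0)"] unfolding k_def by auto
  have expand: "det (mat (Suc m) (Suc m) (\<lambda>rc. h (\<sigma> rc))) = h k * D 0 h + R h" for h
    unfolding det_mat_laplace_row0 sum.lessThan_Suc_shift R_def D_def k_def \<tau>_def
    by (simp add: case_prod_beta')
  have "AE h in PiM I (\<lambda>_. lborel). D 0 h \<noteq> 0"
    unfolding D_def using Suc.IH \<tau> by blast
  moreover have "AE h in PiM I (\<lambda>_. lborel). h k \<noteq> - R h / D 0 h"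
  proof (rule AE_PiM_lborel_coordinate_neq[OF I])
    show "k \<in> I"
      using Suc.prems(1) unfolding k_def by auto
    have "D j \<in> borel_measurable (PiM I (\<lambda>_. lborel))" for j
      unfolding D_def[abs_def] by (rule borel_measurable_det_mat_coordinates[OF \<tau>(1)])
    moreover have "(\<lambda>h. h (\<sigma> (0, Suc j))) \<in> borel_measurable (PiM I (\<lambda>_. lborel))" if "j < m" for j
      using measurable_component_singleton[OF row0(1)[OF that], of "\<lambda>_. lborel"]
      by simp
    ultimately show "(\<lambda>h. - R h / D 0 h) \<in> borel_measurable (PiM I (\<lambda>_. lborel))"
      unfolding R_def by measurable
    have "D j (h(k := y)) = D j h" for j h y
      unfolding D_def using \<tau>(3) by (intro arg_cong[where f = det] eq_matI) auto
    then show "- R (h(k := y)) / D 0 (h(k := y)) = - R h / D 0 h" for h y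
      unfolding R_def using row0(2) by (auto intro!: sum.cong)
  qed
  ultimately show ?case
    by eventually_elim (auto simp: expand field_simps eq_neg_iff_add_eq_0)
qed

section \<open>Channel matrices and precoders\<close>

lemma finite_chan_idx: "finite (chan_idx K L N M)"
proof -
  have "chan_idx K L N M \<subseteq> {..<K} \<times> {..<L} \<times> {..<N} \<times> {..<M}"
    unfolding chan_idx_def by auto
  then show ?thesis
    by (rule finite_subset) auto
qed

lemma chan_mat_carrier: "chan_mat L N M h i \<in> carrier_mat (N * L) (M * L)"
  unfolding chan_mat_def by simp

definition chan_block :: "nat \<Rightarrow> (nat \<times> nat \<times> nat \<times> nat \<Rightarrow> complex) \<Rightarrow> nat \<Rightarrow> nat \<Rightarrow> complex mat" where
  "chan_block M h i t = mat M M (\<lambda>(r, c). h (i, t, r, c))"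

lemma sum_block_reindex:
  fixes G :: "nat \<Rightarrow> 'a :: comm_monoid_add"
  assumes t: "t < L" and MN: "M \<le> N"
  shows "(\<Sum>p<N * L. if p div N = t \<and> p mod N < M then G (p mod N) else 0) = (\<Sum>r<M. G r)"
proof -
  have block: "{p \<in> {..<N * L}. p div N = t \<and> p mod N < M} = (\<lambda>r. t * N + r) ` {..<M}"
  proof (intro equalityI subsetI)
    fix p assume "p \<in> {p \<in> {..<N * L}. p div N = t \<and> p mod N < M}"
    then have "p = t * N + p mod N" "p mod N \<in> {..<M}"
      by (auto simp: mult.commute)
    then show "p \<in> (\<lambda>r. t * N + r) ` {..<M}"
      by (rule image_eqI)
  next
    fix p assume "p \<in> (\<lambda>r. t * N + r) ` {..<M}"
    then obtain r where r: "r < M" "p = t * N + r"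
      by blast
    have "t * N + r < (t + 1) * N"
      using r MN by simp
    also have "\<dots> \<le> N * L"
      using mult_le_mono1[of "t + 1" L N] t by (simp add: mult.commute)
    finally show "p \<in> {p \<in> {..<N * L}. p div N = t \<and> p mod N < M}"
      using r MN by auto
  qed
  have "(\<Sum>p<N * L. if p div N = t \<and> p mod N < M then G (p mod N) else 0)
      = (\<Sum>p \<in> (\<lambda>r. t * N + r) ` {..<M}. G (p mod N))"
    by (simp only: sum.inter_filter[OF finite_lessThan, symmetric] block)
  also have "\<dots> = (\<Sum>r<M. G r)"
    using MN by (subst sum.reindex) (auto simp: inj_on_def intro!: sum.cong)
  finally show ?thesis .
qed

(* Row q mod M of the adjugate of the diagonal block of H_{i,i} containing column q, padded with
   zeros: a functional that annihilates every column of H_{i,i} except column q. *)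
definition block_adj_row :: "nat \<Rightarrow> nat \<Rightarrow> nat \<Rightarrow> (nat \<times> nat \<times> nat \<times> nat \<Rightarrow> complex) \<Rightarrow> nat \<Rightarrow> nat \<Rightarrow> complex vec" where
  "block_adj_row L N M h i q = vec (N * L) (\<lambda>p.
     if p div N = q div M \<and> p mod N < M then adj_mat (chan_block M h i (q div M)) $$ (q mod M, p mod N) else 0)"

lemma scalar_prod_block_adj_row_col_chan_mat:
  assumes MN: "M \<le> N" and q: "q < M * L" and k: "k < M * L"
  shows "scalar_prod (block_adj_row L N M h i q) (col (chan_mat L N M h i) k) =
    (if k = q then det (chan_block M h i (q div M)) else 0)"
proof -
  define t where "t = q div M"
  define B where "B = chan_block M h i t"
  have M: "0 < M"
    using q by (cases M) auto
  have t: "t < L"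
    using q unfolding t_def by (simp add: less_mult_imp_div_less mult.commute)
  have B: "B \<in> carrier_mat M M"
    unfolding B_def chan_block_def by simp
  have "scalar_prod (block_adj_row L N M h i q) (col (chan_mat L N M h i) k) =
      (\<Sum>p<N * L. if p div N = t \<and> p mod N < M then
         (if k div M = t then adj_mat B $$ (q mod M, p mod N) * B $$ (p mod N, k mod M) else 0) else 0)"
    using k M unfolding scalar_prod_def block_adj_row_def chan_mat_def B_def chan_block_def t_def
    by (auto simp: atLeast0LessThan intro!: sum.cong)
  also have "\<dots> = (\<Sum>r<M. if k div M = t then adj_mat B $$ (q mod M, r) * B $$ (r, k mod M) else 0)"
    by (rule sum_block_reindex[OF t MN])
  also have "\<dots> = (if k div M = t then (adj_mat B * B) $$ (q mod M, k mod M) else 0)"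
    using M adj_mat(1)[OF B] B by (auto simp: scalar_prod_def atLeast0LessThan intro!: sum.cong)
  also have "\<dots> = (if k = q then det B else 0)"
  proof -
    have "k div M = q div M \<Longrightarrow> q mod M = k mod M \<longleftrightarrow> k = q"
      by (metis div_mult_mod_eq)
    then show ?thesis
      using M unfolding adj_mat(3)[OF B] t_def by auto
  qed
  finally show ?thesis
    unfolding B_def t_def .
qed

definition unit_precoder_col :: "nat \<Rightarrow> nat \<Rightarrow> nat \<Rightarrow> nat \<Rightarrow> nat" where
  "unit_precoder_col n K j c = (if c < n - K then c else n - K + j)"

definition unit_precoder :: "nat \<Rightarrow> nat \<Rightarrow> nat \<Rightarrow> complex mat" where
  "unit_precoder n K j = mat n (n - K + 1) (\<lambda>(p, c). if p = unit_precoder_col n K j c then 1 else 0)"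

lemma unit_precoder_carrier: "unit_precoder n K j \<in> carrier_mat n (n - K + 1)"
  unfolding unit_precoder_def by simp

lemma unit_precoder_col_less:
  "K \<le> n \<Longrightarrow> j < K \<Longrightarrow> c < n - K + 1 \<Longrightarrow> unit_precoder_col n K j c < n"
  unfolding unit_precoder_col_def by auto

lemma col_unit_precoder:
  assumes "K \<le> n" "j < K" "c < n - K + 1"
  shows "col (unit_precoder n K j) c = unit_vec n (unit_precoder_col n K j c)"
  using assms unit_precoder_col_less[OF assms] unfolding unit_precoder_def by (intro eq_vecI) auto

lemma col_mult_unit_precoder:
  assumes H: "H \<in> carrier_mat m n" and "K \<le> n" "j < K" "c < n - K + 1"
  shows "col (H * unit_precoder n K j) c = col H (unit_precoder_col n K j c)"
  using assms col_mult2[OF H unit_precoder_carrier \<open>c < n - K + 1\<close>]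
  by (simp add: col_unit_precoder mult_mat_vec_unit_vec unit_precoder_col_less)

lemma rank_unit_precoder:
  assumes K: "K \<le> n" and j: "j < K"
  shows "vec_space.rank n (unit_precoder n K j) = n - K + 1"
proof -
  interpret Vn: vec_space "TYPE(complex)" n .
  have cols: "cols (unit_precoder n K j) = map (\<lambda>c. unit_vec n (unit_precoder_col n K j c)) [0..<n - K + 1]"
    using col_unit_precoder[OF K j] unit_precoder_carrier[of n K j] by (auto simp: cols_def)
  have "inj_on (unit_precoder_col n K j) {0..<n - K + 1}"
    using j unfolding unit_precoder_col_def inj_on_def by auto
  then have "distinct (cols (unit_precoder n K j))"
    using unit_precoder_col_less[OF K j] unfolding cols distinct_map by (auto simp: inj_on_def)
  moreover have "Vn.lin_indpt (set (cols (unit_precoder n K j)))"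
  proof -
    have "Vn.lin_indpt (set (unit_vecs n))"
      using Vn.unit_vecs_basis unfolding Vn.basis_def by blast
    moreover have "set (cols (unit_precoder n K j)) \<subseteq> set (unit_vecs n)"
      unfolding cols unit_vecs_def using unit_precoder_col_less[OF K j] by auto
    ultimately show ?thesis
      using Vn.supset_ld_is_ld by blast
  qed
  ultimately show ?thesis
    by (rule Vn.lin_indpt_full_rank[OF unit_precoder_carrier])
qed

lemma desired_space_not_subset_interference_space:
  assumes MN: "M \<le> N" and KML: "K \<le> M * L" and i: "i < K"
    and dets: "\<forall>t<L. det (chan_block M h i t) \<noteq> 0"
  shows "\<not> desired_space L N M h (unit_precoder (M * L) K) i
    \<subseteq> interference_space K L N M h (unit_precoder (M * L) K) i"
proof
  define n where "n = M * L"
  define H where "H = chan_mat L N M h i"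
  define q where "q = n - K + i"
  define phi where "phi = block_adj_row L N M h i q"
  interpret Vm: vec_space "TYPE(complex)" "N * L" .
  have H: "H \<in> carrier_mat (N * L) n"
    unfolding H_def n_def by (rule chan_mat_carrier)
  have K: "K \<le> n" and q: "q < n"
    using KML i unfolding n_def q_def by auto
  have HQ: "H * unit_precoder n K j \<in> carrier_mat (N * L) (n - K + 1)" for j
    using H unit_precoder_carrier by auto
  have phi_col: "scalar_prod phi (col H k) = (if k = q then det (chan_block M h i (q div M)) else 0)"
    if "k < n" for k
    using scalar_prod_block_adj_row_col_chan_mat[OF MN] q that unfolding phi_def H_def n_def by simp
  have "q div M < L"
    using q unfolding n_def by (simp add: less_mult_imp_div_less mult.commute)
  then have "scalar_prod phi (col H q) \<noteq> 0"
    using phi_col[OF q] dets by simp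
  moreover have "scalar_prod phi x = 0"
    if x_gen: "x \<in> (\<Union>j\<in>{j. j < K \<and> j \<noteq> i}. set (cols (H * unit_precoder n K j)))" for x
  proof -
    obtain j where j: "j < K" "j \<noteq> i" and "x \<in> set (cols (H * unit_precoder n K j))"
      using x_gen by blast
    then obtain c where c: "c < n - K + 1" and x: "x = col (H * unit_precoder n K j) c"
      using HQ[of j] by (auto simp: cols_def)
    have "unit_precoder_col n K j c \<noteq> q" "unit_precoder_col n K j c < n"
      using j c unit_precoder_col_less[OF K j(1) c] unfolding unit_precoder_col_def q_def by auto
    then show ?thesis
      using phi_col x col_mult_unit_precoder[OF H K j(1) c] by simp
  qed
  moreover have "(\<Union>j\<in>{j. j < K \<and> j \<noteq> i}. set (cols (H * unit_precoder n K j))) \<subseteq> carrier_vec (N * L)"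
    using HQ cols_dim by fastforce
  moreover have "phi \<in> carrier_vec (N * L)"
    unfolding phi_def block_adj_row_def by simp
  ultimately have "col H q \<notin> interference_space K L N M h (unit_precoder n K) i"
    unfolding interference_space_def H_def by (intro notin_span_if_scalar_prod_separates) auto
  moreover have "col H q \<in> desired_space L N M h (unit_precoder n K) i"
  proof -
    have "col H q = col (H * unit_precoder n K i) (n - K)"
      using col_mult_unit_precoder[OF H K i] unfolding unit_precoder_col_def q_def by simp
    also have "\<dots> \<in> set (cols (H * unit_precoder n K i))"
      using HQ[of i] by (auto simp: cols_def)
    finally have "col H q \<in> set (cols (H * unit_precoder n K i))" .
    moreover have "set (cols (H * unit_precoder n K i)) \<subseteq> carrier_vec (N * L)"
      using HQ[of i] cols_dim by fastforce
    ultimately show ?thesis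
      unfolding desired_space_def Vm.col_space_def H_def[symmetric] using Vm.in_own_span by blast
  qed
  moreover assume "desired_space L N M h (unit_precoder (M * L) K) i
    \<subseteq> interference_space K L N M h (unit_precoder (M * L) K) i"
  ultimately show False
    unfolding n_def by blast
qed

lemma AE_det_chan_block_ne_0:
  assumes "M \<le> N"
  shows "AE h in channel_measure K L N M. \<forall>i<K. \<forall>t<L. det (chan_block M h i t) \<noteq> 0"
proof -
  have "AE h in channel_measure K L N M. det (chan_block M h i t) \<noteq> 0" if "i < K" "t < L" for i t
  proof -
    let ?\<sigma> = "\<lambda>(r, c). (i, t, r, c)"
    have "?\<sigma> ` ({..<M} \<times> {..<M}) \<subseteq> chan_idx K L N M" "inj_on ?\<sigma> ({..<M} \<times> {..<M})"
      using that assms unfolding chan_idx_def inj_on_def by auto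
    from AE_det_mat_ne_0[OF finite_chan_idx this] show ?thesis
      unfolding channel_measure_def chan_block_def by (simp add: case_prod_beta')
  qed
  then have "AE h in channel_measure K L N M. \<forall>i\<in>{..<K}. \<forall>t\<in>{..<L}. det (chan_block M h i t) \<noteq> 0"
    by (intro AE_finite_allI) auto
  then show ?thesis
    by eventually_elim auto
qed

lemma achievable_unit_precoder:
  assumes "M \<le> N" and "K \<le> M * L"
  shows "achievable K L M N (M * L - K + 1)"
  unfolding achievable_def
proof (intro exI conjI allI impI)
  show "unit_precoder (M * L) K j \<in> carrier_mat (M * L) (M * L - K + 1)"
    "vec_space.rank (M * L) (unit_precoder (M * L) K j) = M * L - K + 1" if "j < K" for j
    using unit_precoder_carrier rank_unit_precoder[OF assms(2) that] by auto
  show "AE h in channel_measure K L N M. \<forall>i<K. \<not> desired_space L N M h (unit_precoder (M * L) K) i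
      \<subseteq> interference_space K L N M h (unit_precoder (M * L) K) i"
    using AE_det_chan_block_ne_0[OF assms(1)]
    by eventually_elim (use desired_space_not_subset_interference_space[OF assms] in blast)
qed

lemma achievable_le:
  assumes "0 < K" and "achievable K L M N d"
  shows "d + K - 1 \<le> M * L"
proof -
  obtain Q where Q: "\<forall>j<K. Q j \<in> carrier_mat (M * L) d \<and> vec_space.rank (M * L) (Q j) = d"
    and AE: "AE h in channel_measure K L N M.
      \<forall>i<K. \<not> desired_space L N M h Q i \<subseteq> interference_space K L N M h Q i"
    using assms(2) unfolding achievable_def by blast
  obtain h where "\<forall>i<K. \<not> desired_space L N M h Q i \<subseteq> interference_space K L N M h Q i"
    using AE_imp_ex_in_space[OF emeasure_space_PiM_lborel_ne_0[OF finite_chan_idx]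
        AE[unfolded channel_measure_def]]
    by blast
  then show ?thesis
    using precoder_rank_bound[OF assms(1) Q, of "chan_mat L N M h"] chan_mat_carrier
    unfolding desired_space_def interference_space_def by blast
qed

theorem corollary1:
  fixes K L M N :: nat
  assumes "0 < K" and "0 < L" and "0 < M" and "0 < N" and "M \<le> N"
    and "K \<le> M * L"
  shows "(real (M * L) - real K + 1) / real (M * L) \<in> SpAC_set K L M N \<and>
         (\<forall>s \<in> SpAC_set K L M N. s \<le> (real (M * L) - real K + 1) / real (M * L))"
proof
  have "real (M * L - K + 1) = real (M * L) - real K + 1"
    using assms(6) by simp
  then show "(real (M * L) - real K + 1) / real (M * L) \<in> SpAC_set K L M N"
    unfolding SpAC_set_def using achievable_unit_precoder[OF assms(5,6)] by force
next
  have "real d \<le> real (M * L) - real K + 1" if "achievable K L M N d" for d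
    using achievable_le[OF assms(1) that] assms(1) by linarith
  moreover have "0 < real (M * L)"
    using assms(2,3) by simp
  ultimately show "\<forall>s \<in> SpAC_set K L M N. s \<le> (real (M * L) - real K + 1) / real (M * L)"
    unfolding SpAC_set_def by (auto intro: divide_right_mono)
qed

end
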